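(* Let $f_{SN_2}(x)=\sqrt{\frac{x^2+1}{2}}-\left(\frac{\sqrt x+1}{2}\right)\sqrt{\frac{x+1}{2}}$ for $x\in(0,\infty)$, let $f_{SN_2}^*(u)=u\,f_{SN_2}\!\left(\frac{1-u}{u}\right)$ for $u\in(0,1)$, extended by continuity to $[0,1]$ (explicitly $f_{SN_2}^*(u)=\frac{\sqrt2}{4}\left(2\sqrt{u^2+(1-u)^2}-\sqrt u-\sqrt{1-u}\right)$), and define $\overline M_{SN_2}(C_1,C_2)=E_X\{f_{SN_2}^*(P(C_2\mid x))\}$. Then $$P_e\le \frac12\left[1-\frac{4}{\sqrt2}\,\overline M_{SN_2}(C_1,C_2)\right].$$
   Context: Two-class decision problem: classes $C_1,C_2$, an observation $x$ in a space $\mathrm X$ with density $p(x)$, and a posteriori probabilities $P(C_1\mid x),P(C_2\mid x)\ge0$ with $P(C_1\mid x)+P(C_2\mid x)=1$. $E_X\{g(x)\}=\int_{\mathrm X} g(x)p(x)\,dx$. $P_e=E_X\{\min(P(C_1\mid x),P(C_2\mid x))\}$ is the Bayesian probability of error. *)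

theory Defs
  imports "HOL-Probability.Probability"
begin

definition fSN2 :: "real \<Rightarrow> real" where
  "fSN2 x = sqrt ((x\<^sup>2 + 1) / 2) - ((sqrt x + 1) / 2) * sqrt ((x + 1) / 2)"

definition fSN2_star :: "real \<Rightarrow> real" where
  "fSN2_star u = (if 0 < u \<and> u < 1 then u * fSN2 ((1 - u) / u)
     else sqrt 2 / 4 * (2 * sqrt (u\<^sup>2 + (1 - u)\<^sup>2) - sqrt u - sqrt (1 - u)))"

definition M_SN2 :: "'a measure \<Rightarrow> ('a \<Rightarrow> real) \<Rightarrow> real" where
  "M_SN2 M P2 = (\<integral>x. fSN2_star (P2 x) \<partial>M)"

definition bayes_error :: "'a measure \<Rightarrow> ('a \<Rightarrow> real) \<Rightarrow> ('a \<Rightarrow> real) \<Rightarrow> real" where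
  "bayes_error M P1 P2 = (\<integral>x. min (P1 x) (P2 x) \<partial>M)"

end

theory Submission
  imports Defs
begin

text \<open>Pointwise, with \<open>u = P(C\<^sub>2 | x)\<close>, \<open>a = \<surd>u \<le> b = \<surd>(1 - u)\<close> (the case \<open>u \<le> 1/2\<close>; the other
  is symmetric), the bound reads \<open>2a\<^sup>2 + 2\<surd>(a\<^sup>4 + b\<^sup>4) \<le> 1 + a + b\<close> on the circle \<open>a\<^sup>2 + b\<^sup>2 = 1\<close>.
  Since \<open>1 + a + b - 2a\<^sup>2 = (b + a)(b - a + 1)\<close> there, squaring reduces it to the nonnegativity of
  \<open>d(1 - d)(4 + d - d\<^sup>2)\<close> with \<open>d = b - a \<in> [0, 1]\<close>.\<close>

lemma sqrt_fourth_powers_le_on_circle: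
  fixes a b :: real
  assumes "0 \<le> a" "a \<le> b" "a\<^sup>2 + b\<^sup>2 = 1"
  shows "2 * a\<^sup>2 + 2 * sqrt (a ^ 4 + b ^ 4) \<le> 1 + a + b"
proof -
  define d where "d = b - a"
  have "d\<^sup>2 \<le> 1"
    using assms by (simp add: d_def power2_eq_square algebra_simps)
  then have d: "0 \<le> d" "d \<le> 1"
    using assms by (auto simp: d_def abs_square_le_1)
  have "d\<^sup>2 \<le> d"
    using d by (simp add: power2_eq_square mult_left_le_one_le)
  then have "0 \<le> d * (1 - d) * (4 + d - d\<^sup>2)"
    using d by simp
  also have "d * (1 - d) * (4 + d - d\<^sup>2) = ((b + a) * (b - a + 1))\<^sup>2 - 4 * (a ^ 4 + b ^ 4)"
    using assms(3) unfolding d_def by algebra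
  finally have "sqrt (a ^ 4 + b ^ 4) \<le> (b + a) * (b - a + 1) / 2"
    using assms by (intro real_le_lsqrt) (auto simp: power_divide)
  also have "(b + a) * (b - a + 1) = 1 + a + b - 2 * a\<^sup>2"
    using assms(3) by (simp add: power2_eq_square algebra_simps)
  finally show ?thesis
    by simp
qed

lemma fSN2_star_closed_form:
  assumes "0 \<le> u" "u \<le> 1"
  shows "fSN2_star u = sqrt 2 / 4 * (2 * sqrt (u\<^sup>2 + (1 - u)\<^sup>2) - sqrt u - sqrt (1 - u))"
proof (cases "0 < u \<and> u < 1")
  case True
  then have u: "0 < u" "u < 1"
    by auto
  have sq: "((1 - u) / u)\<^sup>2 + 1 = (u\<^sup>2 + (1 - u)\<^sup>2) / u\<^sup>2"
    using u by (simp add: field_simps power2_eq_square)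
  have lin: "(1 - u) / u + 1 = 1 / u"
    using u by (simp add: field_simps)
  have "u * fSN2 ((1 - u) / u)
      = sqrt ((u\<^sup>2 + (1 - u)\<^sup>2) / 2) - (sqrt (1 - u) / sqrt u + 1) / 2 * (u * sqrt (1 / (2 * u)))"
    unfolding fSN2_def sq lin using u
    by (simp add: real_sqrt_divide real_sqrt_mult algebra_simps)
  also have "u * sqrt (1 / (2 * u)) = sqrt u / sqrt 2"
    using u by (simp add: real_sqrt_divide real_sqrt_mult field_simps)
  also have "(sqrt (1 - u) / sqrt u + 1) / 2 * (sqrt u / sqrt 2) = (sqrt (1 - u) + sqrt u) / (2 * sqrt 2)"
    using u by (simp add: field_simps)
  also have "sqrt ((u\<^sup>2 + (1 - u)\<^sup>2) / 2) - (sqrt (1 - u) + sqrt u) / (2 * sqrt 2)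
      = sqrt 2 / 4 * (2 * sqrt (u\<^sup>2 + (1 - u)\<^sup>2) - sqrt u - sqrt (1 - u))"
    by (simp add: real_sqrt_divide field_simps)
  finally show ?thesis
    using True by (simp add: fSN2_star_def)
next
  case False
  then show ?thesis
    by (simp only: fSN2_star_def if_not_P[OF False] if_False)
qed

lemma min_le_fSN2_star_bound:
  assumes "0 \<le> u" "u \<le> 1"
  shows "min (1 - u) u \<le> 1/2 * (1 - 4 / sqrt 2 * fSN2_star u)"
proof -
  have bound: "2 * v + 2 * sqrt (v\<^sup>2 + (1 - v)\<^sup>2) \<le> 1 + sqrt v + sqrt (1 - v)"
    if "0 \<le> v" "v \<le> 1/2" for v :: real
  proof -
    have "sqrt w ^ 4 = w\<^sup>2" if "0 \<le> w" for w :: real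
      using that by (metis power_mult num_double numeral_times_numeral real_sqrt_pow2)
    then show ?thesis
      using sqrt_fourth_powers_le_on_circle[of "sqrt v" "sqrt (1 - v)"] that by simp
  qed
  have "4 / sqrt 2 * fSN2_star u = 2 * sqrt (u\<^sup>2 + (1 - u)\<^sup>2) - sqrt u - sqrt (1 - u)"
    using assms by (simp add: fSN2_star_closed_form)
  moreover have "2 * min (1 - u) u + 2 * sqrt (u\<^sup>2 + (1 - u)\<^sup>2) \<le> 1 + sqrt u + sqrt (1 - u)"
  proof (cases "u \<le> 1/2")
    case True
    then show ?thesis
      using assms bound[of u] by simp
  next
    case False
    then show ?thesis
      using assms bound[of "1 - u"] by (simp add: add.commute add_ac)
  qed
  ultimately show ?thesis
    by simp
qed

lemma abs_fSN2_star_le: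
  assumes "0 \<le> u" "u \<le> 1"
  shows "\<bar>fSN2_star u\<bar> \<le> sqrt 2"
proof -
  have "u\<^sup>2 \<le> 1" "(1 - u)\<^sup>2 \<le> 1"
    using assms by (auto intro: power_le_one)
  then have "sqrt (u\<^sup>2 + (1 - u)\<^sup>2) \<le> sqrt 4"
    by (intro real_sqrt_le_mono) simp
  then have "sqrt (u\<^sup>2 + (1 - u)\<^sup>2) \<le> 2"
    by simp
  moreover have "0 \<le> sqrt u" "sqrt u \<le> 1" "0 \<le> sqrt (1 - u)" "sqrt (1 - u) \<le> 1"
    using assms by auto
  ultimately have "\<bar>2 * sqrt (u\<^sup>2 + (1 - u)\<^sup>2) - sqrt u - sqrt (1 - u)\<bar> \<le> 4"
    unfolding abs_le_iff by (smt (verit) real_sqrt_ge_zero zero_le_power2)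
  then show ?thesis
    using assms by (simp add: fSN2_star_closed_form abs_mult)
qed

theorem mainTheorem2:
  fixes M :: "'a measure" and P1 P2 :: "'a \<Rightarrow> real"
  assumes "prob_space M"
    and "P1 \<in> borel_measurable M" and "P2 \<in> borel_measurable M"
    and "\<And>x. x \<in> space M \<Longrightarrow> P1 x \<ge> 0"
    and "\<And>x. x \<in> space M \<Longrightarrow> P2 x \<ge> 0"
    and "\<And>x. x \<in> space M \<Longrightarrow> P1 x + P2 x = 1"
  shows "bayes_error M P1 P2 \<le> 1/2 * (1 - 4 / sqrt 2 * M_SN2 M P2)"
proof -
  interpret prob_space M by fact
  have P2: "0 \<le> P2 x" "P2 x \<le> 1" "P1 x = 1 - P2 x" if "x \<in> space M" for x
    using assms(4-6)[OF that] by auto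
  have "(\<lambda>x. fSN2_star (P2 x)) \<in> borel_measurable M"
    unfolding fSN2_star_def fSN2_def using assms(3) by measurable
  then have int_star: "integrable M (\<lambda>x. fSN2_star (P2 x))"
    by (intro integrable_const_bound[where B = "sqrt 2"]) (auto simp: P2 abs_fSN2_star_le)
  have "integrable M (\<lambda>x. min (P1 x) (P2 x))"
    by (intro integrable_const_bound[where B = 1]) (use assms(2,3) in \<open>auto simp: P2\<close>)
  then have "bayes_error M P1 P2 \<le> (\<integral>x. 1/2 * (1 - 4 / sqrt 2 * fSN2_star (P2 x)) \<partial>M)"
    unfolding bayes_error_def
  proof (rule integral_mono)
    fix x
    assume "x \<in> space M"
    then show "min (P1 x) (P2 x) \<le> 1/2 * (1 - 4 / sqrt 2 * fSN2_star (P2 x))"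
      using min_le_fSN2_star_bound[of "P2 x"] by (simp add: P2)
  qed (use int_star in auto)
  also have "\<dots> = 1/2 * (1 - 4 / sqrt 2 * M_SN2 M P2)"
    using int_star by (simp add: M_SN2_def prob_space)
  finally show ?thesis .
qed

end
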